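(* Let $\nu>0$, $q\ge0$, $k\ge1$, let $\pi_0,\ldots,\pi_k>0$ with $\sum_j\pi_j=1$, let $\lambda_0,\ldots,\lambda_k\ge1$, and let $c_0,\ldots,c_k\in\mathbb R$ satisfy \[ \sum_{j=0}^k c_j=1,\qquad \sum_{j=0}^k c_j\lambda_j=0. \] Then \[ K_{q,k}:=\nu\left[\sum_{j=0}^k\frac{c_j^2\lambda_j^q}{\pi_j}-1\right]>0. \]
   Context: In the application, $\lambda_j$ are the noise scale factors of a Richardson zero-noise-extrapolation rule of order $k$ (so the coefficients also satisfy $\sum_j c_j\lambda_j^m=0$ for $m=1,\ldots,k$), $\pi_j$ are the fractions of the total shot budget allocated to scale $\lambda_j$, and $\nu\epsilon^q$ is the leading term of the single-shot variance $v(\epsilon)$; $K_{q,k}\epsilon^q/B$ is then the leading excess variance of the Richardson estimator over the unmitigated estimator with budget $B$. *)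

theory Defs
  imports "HOL-Analysis.Analysis"
begin

end

theory Submission
  imports Defs
begin

text \<open>Since every \<open>\<lambda>\<^sub>j \<ge> 1\<close>, the moment conditions \<open>\<Sum> c\<^sub>j = 1\<close> and \<open>\<Sum> c\<^sub>j \<lambda>\<^sub>j = 0\<close>
  force some coefficient to be negative, hence \<open>\<Sum> \<bar>c\<^sub>j\<bar> > 1\<close>. By Cauchy-Schwarz with
  weights \<open>\<pi>\<^sub>j\<close> summing to one, \<open>\<Sum> c\<^sub>j\<^sup>2 / \<pi>\<^sub>j \<ge> (\<Sum> \<bar>c\<^sub>j\<bar>)\<^sup>2 > 1\<close>, and the factors
  \<open>\<lambda>\<^sub>j powr q \<ge> 1\<close> only increase the left-hand side.\<close>

lemma Cauchy_Schwarz_ineq_sum_weighted: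
  fixes a p :: "'a \<Rightarrow> real"
  assumes "\<And>i. i \<in> I \<Longrightarrow> p i > 0"
  shows "(\<Sum>i\<in>I. a i)\<^sup>2 \<le> (\<Sum>i\<in>I. (a i)\<^sup>2 / p i) * (\<Sum>i\<in>I. p i)"
proof -
  have "(\<Sum>i\<in>I. a i)\<^sup>2 = (\<Sum>i\<in>I. a i / sqrt (p i) * sqrt (p i))\<^sup>2"
    using assms by (intro arg_cong[where f = power2] sum.cong) force+
  also have "\<dots> \<le> (\<Sum>i\<in>I. (a i / sqrt (p i))\<^sup>2) * (\<Sum>i\<in>I. (sqrt (p i))\<^sup>2)"
    by (rule Cauchy_Schwarz_ineq_sum)
  also have "\<dots> = (\<Sum>i\<in>I. (a i)\<^sup>2 / p i) * (\<Sum>i\<in>I. p i)"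
    using assms by (intro arg_cong2[where f = "(*)"] sum.cong) (auto simp: power_divide less_imp_le)
  finally show ?thesis .
qed

lemma exists_neg_coeff_if_sum_scaled_less:
  fixes c lam :: "'a \<Rightarrow> real"
  assumes "\<And>j. j \<in> A \<Longrightarrow> lam j \<ge> 1"
    and "(\<Sum>j\<in>A. c j * lam j) < (\<Sum>j\<in>A. c j)"
  shows "\<exists>j\<in>A. c j < 0"
proof (rule ccontr)
  assume "\<not> (\<exists>j\<in>A. c j < 0)"
  then have "\<And>j. j \<in> A \<Longrightarrow> c j \<le> c j * lam j"
    using assms(1) by (metis linorder_not_le mult_le_cancel_left1)
  then have "(\<Sum>j\<in>A. c j) \<le> (\<Sum>j\<in>A. c j * lam j)"
    by (rule sum_mono)
  with assms(2) show False by simp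
qed

lemma sum_less_sum_abs_if_neg:
  fixes c :: "'a \<Rightarrow> real"
  assumes "finite A" and "j \<in> A" and "c j < 0"
  shows "(\<Sum>i\<in>A. c i) < (\<Sum>i\<in>A. \<bar>c i\<bar>)"
  using assms by (intro sum_strict_mono_ex1) (auto intro!: bexI[of _ j])

theorem proposition2:
  fixes nu q :: real and k :: nat
    and p lam c :: "nat \<Rightarrow> real"
  assumes "nu > 0" and "q \<ge> 0" and "k \<ge> 1"
    and "\<And>j. j \<le> k \<Longrightarrow> p j > 0"
    and "(\<Sum>j\<le>k. p j) = 1"
    and "\<And>j. j \<le> k \<Longrightarrow> lam j \<ge> 1"
    and "(\<Sum>j\<le>k. c j) = 1"
    and "(\<Sum>j\<le>k. c j * lam j) = 0"
  shows "nu * ((\<Sum>j\<le>k. (c j)\<^sup>2 * lam j powr q / p j) - 1) > 0"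
proof -
  obtain j0 where "j0 \<le> k" "c j0 < 0"
    using exists_neg_coeff_if_sum_scaled_less[of "{..k}" lam c] assms(6-8) by auto
  then have "1 < (\<Sum>j\<le>k. \<bar>c j\<bar>)"
    using sum_less_sum_abs_if_neg[of "{..k}" j0 c] assms(7) by simp
  then have "1 < (\<Sum>j\<le>k. \<bar>c j\<bar>)\<^sup>2"
    by (simp add: one_less_power)
  also have "\<dots> \<le> (\<Sum>j\<le>k. (c j)\<^sup>2 / p j)"
    using Cauchy_Schwarz_ineq_sum_weighted[of "{..k}" p "\<lambda>j. \<bar>c j\<bar>"] assms(4,5) by simp
  also have "\<dots> \<le> (\<Sum>j\<le>k. (c j)\<^sup>2 * lam j powr q / p j)"
  proof (rule sum_mono)
    fix j assume "j \<in> {..k}"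
    then have "1 \<le> lam j powr q" and "p j > 0"
      using assms(2,4,6) by (auto intro: ge_one_powr_ge_zero)
    then show "(c j)\<^sup>2 / p j \<le> (c j)\<^sup>2 * lam j powr q / p j"
      using mult_left_mono[of 1 "lam j powr q" "(c j)\<^sup>2"] by (simp add: divide_right_mono)
  qed
  finally show ?thesis
    using assms(1) by simp
qed

end
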